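(* Let $\mathcal P$ be an energy timed path from $s_0$ to $s_n$ and $E$ an energy constraint. Then the energy relation $\mathcal R^E_{\mathcal P}$ is a closed convex subset of $E\times E$ and can be described by a finite conjunction of non-strict linear inequalities with rational coefficients over $(w_0,w_1)$. Consequently, for every $I\in\mathcal I(E)$, both $\mathcal R^E_{\mathcal P}(I)$ and $(\mathcal R^E_{\mathcal P})^{-1}(I)$ belong to $\mathcal I(E)$. The same holds for any finite composition $\mathcal R^E_{\mathcal P_k}\circ\cdots\circ\mathcal R^E_{\mathcal P_1}$ of such energy relations.
   Context: An energy timed automaton (ETA) is a tuple $\langle S,S_0,X,\mathrm{Inv},r,T\rangle$ where $S$ is a finite set of states, $S_0\subseteq S$ the initial states, $X$ a finite set of clocks, $\mathrm{Inv}$ assigns to each state an invariant which is a conjunction of closed (non-strict) clock constraints $x\bowtie c$ with $\bowtie\in\{\le,\ge,=\}$ and $c$ rational, $r\colon S\to\mathbb Q$ assigns an energy rate to each state, and $T$ is a finite set of transitions $(s,g,u,z,s')$ with $g$ a closed clock constraint (guard), $u\in\mathbb Q$ an energy update, and $z\subseteq X$ a set of clocks to reset. Given transitions $t_i=(s_i,g_i,u_i,z_i,s_{i+1})$, $0\le i<n$, a finite run is a sequence of configurations $(\ell_j,v_j,w_j)_{0\le j\le 2n}$ for which there exist delays $d_i\ge 0$ with: $\ell_{2j}=\ell_{2j+1}=s_j$, $\ell_{2n}=s_n$; $v_{2j+1}=v_{2j}+d_j$, $v_{2j+2}=v_{2j+1}[z_j\to0]$; $v_{2j}\models\mathrm{Inv}(s_j)$,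 $v_{2j+1}\models \mathrm{Inv}(s_j)\wedge g_j$; $w_{2j+1}=w_{2j}+d_j\,r(s_j)$, $w_{2j+2}=w_{2j+1}+u_j$. An energy constraint is a closed interval $E$ with rational bounds; a run satisfies $E$ if all its energy levels lie in $E$. $\mathcal I(E)$ is the set of closed subintervals of $E$ (including $\emptyset$). An energy timed path (ETP) from $s_0$ to $s_n$ is an ETA with states $s_0,\dots,s_n$, initial state $s_0$, and exactly one transition from $s_i$ to $s_{i+1}$ for each $i<n$. The energy relation $\mathcal R^E_{\mathcal P}(w_0,w_1)$ holds iff there is a finite run of $\mathcal P$ from $(s_0,\mathbf 0,w_0)$ to $(s_n,\mathbf 0,w_1)$ satisfying $E$. For $I\in\mathcal I(E)$: $\mathcal R(I)=\{w_1\in E\mid\exists w_0\in I.\ \mathcal R(w_0,w_1)\}$, $\mathcal R^{-1}(I)=\{w_0\in E\mid \exists w_1\in I.\ \mathcal R(w_0,w_1)\}$. *)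

theory Defs
  imports "HOL-Analysis.Analysis"
begin

(* Clock set X is modelled as a finite type 'c; valuations are 'c \<Rightarrow> real. *)

datatype cmp = CLe | CGe | CEq

type_synonym 'c atom = "'c \<times> cmp \<times> rat"
type_synonym 'c clkc = "'c atom list"

fun sat_atom :: "('c \<Rightarrow> real) \<Rightarrow> 'c atom \<Rightarrow> bool" where
  "sat_atom v (x, CLe, c) = (v x \<le> of_rat c)"
| "sat_atom v (x, CGe, c) = (v x \<ge> of_rat c)"
| "sat_atom v (x, CEq, c) = (v x = of_rat c)"

definition sat :: "('c \<Rightarrow> real) \<Rightarrow> 'c clkc \<Rightarrow> bool" where
  "sat v g = (\<forall>a\<in>set g. sat_atom v a)"

definition reset :: "('c \<Rightarrow> real) \<Rightarrow> 'c set \<Rightarrow> ('c \<Rightarrow> real)" where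
  "reset v z = (\<lambda>x. if x \<in> z then 0 else v x)"

(* Energy timed path s_0 -> ... -> s_n, n = length (trs P).
   rate i = r(s_i), inv i = Inv(s_i), trs ! i = (g_i, u_i, z_i) the transition s_i -> s_{i+1}. *)
record 'c etp =
  rate :: "nat \<Rightarrow> rat"
  inv  :: "nat \<Rightarrow> 'c clkc"
  trs  :: "('c clkc \<times> rat \<times> 'c set) list"

definition guard :: "'c etp \<Rightarrow> nat \<Rightarrow> 'c clkc" where
  "guard P i = fst (trs P ! i)"
definition upd :: "'c etp \<Rightarrow> nat \<Rightarrow> rat" where
  "upd P i = fst (snd (trs P ! i))"
definition rst :: "'c etp \<Rightarrow> nat \<Rightarrow> 'c set" where
  "rst P i = snd (snd (trs P ! i))"

definition econ :: "rat \<Rightarrow> rat \<Rightarrow> real set" where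
  "econ a b = {of_rat a .. of_rat b}"

(* a finite run of P from (s_0, v0, w0) to (s_n, vn, wn), configurations indexed 0..2n,
   all of whose energy levels lie in E *)
definition run_sat :: "'c etp \<Rightarrow> real set \<Rightarrow> (nat \<Rightarrow> ('c \<Rightarrow> real)) \<Rightarrow> (nat \<Rightarrow> real) \<Rightarrow> bool" where
  "run_sat P E v w \<longleftrightarrow>
     (let n = length (trs P) in
      (\<exists>d :: nat \<Rightarrow> real. \<forall>j<n.
          d j \<ge> 0
        \<and> v (2*j+1) = (\<lambda>x. v (2*j) x + d j)
        \<and> v (2*j+2) = reset (v (2*j+1)) (rst P j)
        \<and> sat (v (2*j)) (inv P j)
        \<and> sat (v (2*j+1)) (inv P j) \<and> sat (v (2*j+1)) (guard P j)
        \<and> w (2*j+1) = w (2*j) + d j * of_rat (rate P j)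
        \<and> w (2*j+2) = w (2*j+1) + of_rat (upd P j))
      \<and> (\<forall>j\<le>2*n. w j \<in> E))"

definition erel :: "'c etp \<Rightarrow> real set \<Rightarrow> (real \<times> real) set" where
  "erel P E = {(w0, w1). \<exists>v w. run_sat P E v w \<and> v 0 = (\<lambda>_. 0) \<and> w 0 = w0
                     \<and> v (2 * length (trs P)) = (\<lambda>_. 0) \<and> w (2 * length (trs P)) = w1}"

definition subints :: "real set \<Rightarrow> real set set" where
  "subints E = {I. I \<subseteq> E \<and> (I = {} \<or> (\<exists>l u. I = {l..u}))}"

definition rimg :: "(real \<times> real) set \<Rightarrow> real set \<Rightarrow> real set \<Rightarrow> real set" where
  "rimg R E I = {w1 \<in> E. \<exists>w0\<in>I. (w0, w1) \<in> R}"

definition rpre :: "(real \<times> real) set \<Rightarrow> real set \<Rightarrow> real set \<Rightarrow> real set" where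
  "rpre R E I = {w0 \<in> E. \<exists>w1\<in>I. (w0, w1) \<in> R}"

(* composition R_{P_k} o ... o R_{P_1} for the list [P_1, ..., P_k] (P_1 applied first) *)
fun ecomp :: "'c etp list \<Rightarrow> real set \<Rightarrow> (real \<times> real) set" where
  "ecomp [] E = Id_on E"
| "ecomp [P] E = erel P E"
| "ecomp (P # Ps) E = erel P E O ecomp Ps E"

definition good_rel :: "(real \<times> real) set \<Rightarrow> real set \<Rightarrow> bool" where
  "good_rel R E \<longleftrightarrow>
     R \<subseteq> E \<times> E \<and> closed R \<and> convex R
   \<and> (\<exists>L :: (rat \<times> rat \<times> rat) list.
        R = {(w0, w1). \<forall>(\<alpha>, \<beta>, \<gamma>)\<in>set L. of_rat \<alpha> * w0 + of_rat \<beta> * w1 \<le> of_rat \<gamma>})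
   \<and> (\<forall>I\<in>subints E. rimg R E I \<in> subints E \<and> rpre R E I \<in> subints E)"

end

theory Submission
  imports Defs
begin

text \<open>A run of an energy timed path with \<open>n\<close> transitions is determined by its initial energy and
  its delays \<open>d\<^sub>0, \<dots>, d\<^sub>n\<^sub>-\<^sub>1\<close>; every clock value and every energy level along the run is an
  affine function of these with rational coefficients. Hence the vectors (initial energy, final
  energy, delays) of the runs satisfying \<open>E\<close> form a rational polyhedron, and eliminating the delays
  by Fourier--Motzkin shows that the energy relation is an intersection of finitely many rational
  half-planes. Composition eliminates the intermediate energy in the same way. Such a relation is
  closed and convex, so inside the compact box \<open>E \<times> E\<close> its restrictions to \<open>I \<times> E\<close> are compact
  and convex, and their projections -- image and preimage of \<open>I\<close> -- are closed intervals.\<close>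

section \<open>Rational polyhedra and Fourier--Motzkin elimination\<close>

text \<open>A form \<open>(c, c\<^sub>0)\<close> over the variables \<open>x\<^sub>0, \<dots>, x\<^sub>m\<^sub>-\<^sub>1\<close> stands for the affine
  function \<open>\<Sum>i<m. c\<^sub>i x\<^sub>i + c\<^sub>0\<close>; coefficients of index \<open>\<ge> m\<close> are ignored.\<close>

type_synonym form = "(nat \<Rightarrow> rat) \<times> rat"

definition eval_form :: "nat \<Rightarrow> form \<Rightarrow> (nat \<Rightarrow> real) \<Rightarrow> real" where
  "eval_form m f x = (\<Sum>i<m. of_rat (fst f i) * x i) + of_rat (snd f)"

definition solutions :: "nat \<Rightarrow> form list \<Rightarrow> (nat \<Rightarrow> real) set" where
  "solutions m L = {x. \<forall>f\<in>set L. eval_form m f x \<le> 0}"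

definition rat_polyhedron :: "nat \<Rightarrow> (nat \<Rightarrow> real) set \<Rightarrow> bool" where
  "rat_polyhedron m S \<longleftrightarrow> (\<exists>L. S = solutions m L)"

definition form_add :: "form \<Rightarrow> form \<Rightarrow> form" where
  "form_add f g = ((\<lambda>i. fst f i + fst g i), snd f + snd g)"

definition form_scale :: "rat \<Rightarrow> form \<Rightarrow> form" where
  "form_scale q f = ((\<lambda>i. q * fst f i), q * snd f)"

definition form_diff :: "form \<Rightarrow> form \<Rightarrow> form" where
  "form_diff f g = form_add f (form_scale (-1) g)"

definition form_var :: "nat \<Rightarrow> form" where
  "form_var k = ((\<lambda>j. if j = k then 1 else 0), 0)"

definition form_const :: "rat \<Rightarrow> form" where
  "form_const q = ((\<lambda>_. 0), q)"

lemma eval_form_add [simp]: "eval_form m (form_add f g) x = eval_form m f x + eval_form m g x"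
  by (simp add: eval_form_def form_add_def of_rat_add distrib_right sum.distrib)

lemma eval_form_scale [simp]: "eval_form m (form_scale q f) x = of_rat q * eval_form m f x"
  by (simp add: eval_form_def form_scale_def of_rat_mult distrib_left sum_distrib_left mult.assoc)

lemma eval_form_diff [simp]: "eval_form m (form_diff f g) x = eval_form m f x - eval_form m g x"
  by (simp add: form_diff_def)

lemma eval_form_var [simp]:
  assumes "k < m" shows "eval_form m (form_var k) x = x k"
proof -
  have "(\<Sum>i<m. of_rat (fst (form_var k) i) * x i) = (\<Sum>i<m. if i = k then x i else 0)"
    by (rule sum.cong) (auto simp: form_var_def)
  then show ?thesis using assms by (simp add: eval_form_def form_var_def)
qed

lemma eval_form_const [simp]: "eval_form m (form_const q) x = of_rat q"
  by (simp add: eval_form_def form_const_def)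

lemma eval_form_cong: "(\<And>i. i < m \<Longrightarrow> y i = x i) \<Longrightarrow> eval_form m f y = eval_form m f x"
  unfolding eval_form_def by (intro arg_cong2[where f="(+)"] sum.cong) auto

lemma eval_form_Suc_upd:
  "eval_form (Suc m) f (x(m := t)) = eval_form m f x + of_rat (fst f m) * t"
proof -
  have "(\<Sum>i<m. of_rat (fst f i) * (x(m := t)) i) = (\<Sum>i<m. of_rat (fst f i) * x i)"
    by (rule sum.cong) auto
  then show ?thesis by (simp add: eval_form_def)
qed

lemma solutions_append: "solutions m (L1 @ L2) = solutions m L1 \<inter> solutions m L2"
  by (auto simp: solutions_def)

lemma solutions_cong:
  "x \<in> solutions m L \<Longrightarrow> (\<And>i. i < m \<Longrightarrow> y i = x i) \<Longrightarrow> y \<in> solutions m L"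
  using eval_form_cong[of m y x] by (simp add: solutions_def)

definition fm_combine :: "nat \<Rightarrow> form \<Rightarrow> form \<Rightarrow> form" where
  "fm_combine m p n = form_add (form_scale (- fst n m) p) (form_scale (fst p m) n)"

definition fourier_motzkin :: "nat \<Rightarrow> form list \<Rightarrow> form list" where
  "fourier_motzkin m L = filter (\<lambda>f. fst f m = 0) L @
     [fm_combine m p n. p \<leftarrow> filter (\<lambda>f. fst f m > 0) L, n \<leftarrow> filter (\<lambda>f. fst f m < 0) L]"

text \<open>The coefficient of \<open>x\<^sub>m\<close> in \<open>fm_combine m p n\<close> vanishes, so its value does not depend on \<open>x\<^sub>m\<close>.\<close>

lemma eval_fm_combine:
  "eval_form m (fm_combine m p n) x =
     of_rat (- fst n m) * eval_form (Suc m) p (x(m := t))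
   + of_rat (fst p m) * eval_form (Suc m) n (x(m := t))"
proof -
  have "eval_form (Suc m) (fm_combine m p n) (x(m := t)) = eval_form m (fm_combine m p n) x"
    by (simp add: eval_form_Suc_upd fm_combine_def form_add_def form_scale_def)
  then show ?thesis by (simp add: fm_combine_def)
qed

lemma mem_fourier_motzkin:
  "f \<in> set (fourier_motzkin m L) \<longleftrightarrow> f \<in> set L \<and> fst f m = 0
     \<or> (\<exists>p\<in>set L. \<exists>n\<in>set L. 0 < fst p m \<and> fst n m < 0 \<and> f = fm_combine m p n)"
  unfolding fourier_motzkin_def by (simp add: image_iff) fastforce

lemma exists_between_finite_bounds:
  fixes Lo Up :: "real set"
  assumes "finite Lo" "finite Up" "\<And>l u. l \<in> Lo \<Longrightarrow> u \<in> Up \<Longrightarrow> l \<le> u"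
  shows "\<exists>t. (\<forall>l\<in>Lo. l \<le> t) \<and> (\<forall>u\<in>Up. t \<le> u)"
proof (cases "Lo = {}")
  case True
  show ?thesis
  proof (cases "Up = {}")
    case False
    with True assms(2) show ?thesis by (intro exI[of _ "Min Up"]) auto
  qed (use True in auto)
next
  case False
  with assms show ?thesis by (intro exI[of _ "Max Lo"]) auto
qed

lemma solutions_fourier_motzkin_sound:
  assumes "x(m := t) \<in> solutions (Suc m) L"
  shows "x \<in> solutions m (fourier_motzkin m L)"
proof -
  have t: "eval_form (Suc m) f (x(m := t)) \<le> 0" if "f \<in> set L" for f
    using assms that by (auto simp: solutions_def)
  have "eval_form m (fm_combine m p n) x \<le> 0"
    if "p \<in> set L" "n \<in> set L" "0 < fst p m" "fst n m < 0" for p n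
  proof -
    have "of_rat (- fst n m) * eval_form (Suc m) p (x(m := t)) \<le> 0"
      using t[OF that(1)] that(4) by (simp add: mult_nonneg_nonpos)
    moreover have "of_rat (fst p m) * eval_form (Suc m) n (x(m := t)) \<le> 0"
      using t[OF that(2)] that(3) by (simp add: mult_nonneg_nonpos)
    ultimately show ?thesis by (simp add: eval_fm_combine[of m p n x t])
  qed
  moreover have "eval_form m f x \<le> 0" if "f \<in> set L" "fst f m = 0" for f
    using t[OF that(1)] that(2) by (simp add: eval_form_Suc_upd)
  ultimately show ?thesis
    by (auto simp: solutions_def mem_fourier_motzkin)
qed

lemma fm_combine_nonpos_imp_bounds_le:
  assumes "0 < fst p m" "fst n m < 0" "eval_form m (fm_combine m p n) x \<le> 0"
  shows "- eval_form m n x / of_rat (fst n m) \<le> - eval_form m p x / of_rat (fst p m)"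
proof -
  have "- of_rat (fst n m) * eval_form m p x + of_rat (fst p m) * eval_form m n x \<le> 0"
    using assms(3) by (simp add: fm_combine_def of_rat_minus)
  moreover have "of_rat (fst p m) > (0 :: real)" "of_rat (fst n m) < (0 :: real)"
    using assms(1,2) by simp_all
  ultimately show ?thesis by (simp add: field_simps)
qed

text \<open>Each form \<open>f\<close> involving \<open>x\<^sub>m\<close> bounds \<open>x\<^sub>m\<close> by \<open>bound f\<close>, from above if its coefficient is
  positive and from below if it is negative; the combined forms say exactly that every lower bound
  is below every upper bound.\<close>

lemma solutions_fourier_motzkin_complete:
  assumes x: "x \<in> solutions m (fourier_motzkin m L)"
  shows "\<exists>t. x(m := t) \<in> solutions (Suc m) L"
proof -
  have x_sat: "eval_form m f x \<le> 0" if "f \<in> set (fourier_motzkin m L)" for f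
    using x that by (simp add: solutions_def)
  define bound where "bound f = - eval_form m f x / of_rat (fst f m)" for f
  define Up where "Up = bound ` {p \<in> set L. 0 < fst p m}"
  define Lo where "Lo = bound ` {n \<in> set L. fst n m < 0}"
  have "bound n \<le> bound p" if "p \<in> set L" "0 < fst p m" "n \<in> set L" "fst n m < 0" for p n
    unfolding bound_def using that
    by (intro fm_combine_nonpos_imp_bounds_le x_sat) (auto simp: mem_fourier_motzkin)
  then have "l \<le> u" if "l \<in> Lo" "u \<in> Up" for l u
    using that unfolding Lo_def Up_def by blast
  then obtain t where t: "\<forall>l\<in>Lo. l \<le> t" "\<forall>u\<in>Up. t \<le> u"
    using exists_between_finite_bounds[of Lo Up] by (auto simp: Lo_def Up_def)
  have "eval_form (Suc m) f (x(m := t)) \<le> 0" if f: "f \<in> set L" for f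
  proof -
    consider "fst f m = 0" | "fst f m > 0" | "fst f m < 0" by linarith
    then show ?thesis
    proof cases
      case 1
      then show ?thesis using f by (simp add: eval_form_Suc_upd x_sat mem_fourier_motzkin)
    next
      case 2
      then have "t \<le> bound f" using t(2) f unfolding Up_def by blast
      with 2 show ?thesis by (simp add: eval_form_Suc_upd bound_def field_simps)
    next
      case 3
      then have "bound f \<le> t" using t(1) f unfolding Lo_def by blast
      with 3 show ?thesis by (simp add: eval_form_Suc_upd bound_def field_simps)
    qed
  qed
  then show ?thesis unfolding solutions_def by blast
qed

lemma solutions_fourier_motzkin_iff:
  "x \<in> solutions m (fourier_motzkin m L) \<longleftrightarrow> (\<exists>t. x(m := t) \<in> solutions (Suc m) L)"
  using solutions_fourier_motzkin_sound solutions_fourier_motzkin_complete by blast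

lemma rat_polyhedron_project:
  "rat_polyhedron (k + m) S \<Longrightarrow> rat_polyhedron k {x. \<exists>y\<in>S. \<forall>i<k. y i = x i}"
proof (induction m arbitrary: S)
  case 0
  then obtain L where L: "S = solutions k L" by (auto simp: rat_polyhedron_def)
  then have "{x. \<exists>y\<in>S. \<forall>i<k. y i = x i} = S"
    by (auto intro: solutions_cong[of _ k L])
  then show ?case using 0 by simp
next
  case (Suc m)
  then obtain L where L: "S = solutions (Suc (k + m)) L" by (auto simp: rat_polyhedron_def)
  define S' where "S' = solutions (k + m) (fourier_motzkin (k + m) L)"
  have "rat_polyhedron k {x. \<exists>y\<in>S'. \<forall>i<k. y i = x i}"
    by (rule Suc.IH) (auto simp: rat_polyhedron_def S'_def)
  moreover have "{x. \<exists>y\<in>S'. \<forall>i<k. y i = x i} = {x. \<exists>y\<in>S. \<forall>i<k. y i = x i}"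
  proof (intro Collect_cong iffI)
    fix x assume "\<exists>y\<in>S'. \<forall>i<k. y i = x i"
    then obtain y t where "\<forall>i<k. y i = x i" "y(k + m := t) \<in> S"
      by (auto simp: S'_def L solutions_fourier_motzkin_iff)
    then show "\<exists>y\<in>S. \<forall>i<k. y i = x i" by (intro bexI[of _ "y(k + m := t)"]) auto
  next
    fix x assume "\<exists>y\<in>S. \<forall>i<k. y i = x i"
    then obtain y where y: "\<forall>i<k. y i = x i" "y(k + m := y (k + m)) \<in> S" by auto
    then have "y \<in> S'" unfolding S'_def L solutions_fourier_motzkin_iff by blast
    with y show "\<exists>y\<in>S'. \<forall>i<k. y i = x i" by blast
  qed
  ultimately show ?case by simp
qed

section \<open>Relations defined by rational half-planes\<close>

lemma rat_polyhedron_Int: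
  "rat_polyhedron m S \<Longrightarrow> rat_polyhedron m T \<Longrightarrow> rat_polyhedron m (S \<inter> T)"
  unfolding rat_polyhedron_def by (metis solutions_append)

lemma eval_form_2: "eval_form 2 f x = of_rat (fst f 0) * x 0 + of_rat (fst f 1) * x 1 + of_rat (snd f)"
  by (simp add: eval_form_def numeral_2_eq_2)

definition halfplanes :: "(rat \<times> rat \<times> rat) list \<Rightarrow> (real \<times> real) set" where
  "halfplanes L = {(w0, w1). \<forall>(\<alpha>, \<beta>, \<gamma>)\<in>set L. of_rat \<alpha> * w0 + of_rat \<beta> * w1 \<le> of_rat \<gamma>}"

definition rat_polyhedral_rel :: "(real \<times> real) set \<Rightarrow> bool" where
  "rat_polyhedral_rel R \<longleftrightarrow> (\<exists>L. R = halfplanes L)"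

lemma mem_halfplanes:
  "(w0, w1) \<in> halfplanes L \<longleftrightarrow> (\<forall>(\<alpha>, \<beta>, \<gamma>)\<in>set L. of_rat \<alpha> * w0 + of_rat \<beta> * w1 \<le> of_rat \<gamma>)"
  by (simp add: halfplanes_def)

lemma rat_polyhedral_rel_project:
  assumes "rat_polyhedron (2 + m) S"
  shows "rat_polyhedral_rel {(x 0, x 1) |x. x \<in> S}"
proof -
  have "rat_polyhedron 2 {x. \<exists>y\<in>S. \<forall>i<2. y i = x i}"
    using rat_polyhedron_project[OF assms] .
  then obtain L where L: "{x. \<exists>y\<in>S. \<forall>i<2. y i = x i} = solutions 2 L"
    by (auto simp: rat_polyhedron_def)
  define L' where "L' = map (\<lambda>f. (fst f 0, fst f 1, - snd f)) L"
  have "p \<in> {(x 0, x 1) |x. x \<in> S} \<longleftrightarrow> p \<in> halfplanes L'" for p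
  proof -
    obtain w0 w1 where p: "p = (w0, w1)" by fastforce
    have "p \<in> {(x 0, x 1) |x. x \<in> S} \<longleftrightarrow> (\<lambda>i. if i = 0 then w0 else w1) \<in> solutions 2 L"
      unfolding L[symmetric] p by (auto simp: less_2_cases_iff)
    also have "\<dots> \<longleftrightarrow> (\<forall>f\<in>set L. of_rat (fst f 0) * w0 + of_rat (fst f 1) * w1 \<le> - of_rat (snd f))"
      unfolding solutions_def eval_form_2 mem_Collect_eq by (intro ball_cong) auto
    also have "\<dots> \<longleftrightarrow> p \<in> halfplanes L'"
      by (simp add: p mem_halfplanes L'_def of_rat_minus)
    finally show ?thesis .
  qed
  then show ?thesis unfolding rat_polyhedral_rel_def by blast
qed

definition rel_form :: "nat \<Rightarrow> nat \<Rightarrow> rat \<times> rat \<times> rat \<Rightarrow> form" where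
  "rel_form i j = (\<lambda>(\<alpha>, \<beta>, \<gamma>).
     form_add (form_scale \<alpha> (form_var i)) (form_add (form_scale \<beta> (form_var j)) (form_const (- \<gamma>))))"

lemma rat_polyhedron_rel_coords:
  assumes "rat_polyhedral_rel R" "i < m" "j < m"
  shows "rat_polyhedron m {x. (x i, x j) \<in> R}"
proof -
  obtain L where L: "R = halfplanes L"
    using assms(1) by (auto simp: rat_polyhedral_rel_def)
  have "(x i, x j) \<in> R \<longleftrightarrow> x \<in> solutions m (map (rel_form i j) L)" for x
    using assms(2,3) unfolding L mem_halfplanes solutions_def
    by (auto simp: rel_form_def of_rat_minus)
  then show ?thesis unfolding rat_polyhedron_def by blast
qed

lemma rat_polyhedral_rel_relcomp:
  assumes "rat_polyhedral_rel R1" "rat_polyhedral_rel R2"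
  shows "rat_polyhedral_rel (R1 O R2)"
proof -
  define S :: "(nat \<Rightarrow> real) set" where "S = {x. (x 0, x 2) \<in> R1} \<inter> {x. (x 2, x 1) \<in> R2}"
  have "rat_polyhedron (2 + 1) S"
    unfolding S_def using assms by (intro rat_polyhedron_Int rat_polyhedron_rel_coords) auto
  moreover have "R1 O R2 = {(x 0, x 1) |x. x \<in> S}"
  proof (intro set_eqI iffI)
    fix p assume "p \<in> R1 O R2"
    then obtain w0 w1 z where "p = (w0, w1)" "(w0, z) \<in> R1" "(z, w1) \<in> R2" by auto
    then show "p \<in> {(x 0, x 1) |x. x \<in> S}"
      by (intro CollectI exI[of _ "\<lambda>i. if i = 0 then w0 else if i = 1 then w1 else z"]) (simp add: S_def)
  qed (unfold S_def, blast)
  ultimately show ?thesis using rat_polyhedral_rel_project[of 1 S] by simp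
qed

lemma rat_polyhedral_rel_closed_convex:
  assumes "rat_polyhedral_rel R"
  shows "closed R" "convex R"
proof -
  obtain L where "R = halfplanes L"
    using assms by (auto simp: rat_polyhedral_rel_def)
  then have R: "R = \<Inter> ((\<lambda>(\<alpha>, \<beta>, \<gamma>). {p. inner (of_rat \<alpha>, of_rat \<beta>) p \<le> (of_rat \<gamma> :: real)}) ` set L)"
    by (auto simp: halfplanes_def inner_Pair split: prod.splits)
  show "closed R" unfolding R by (intro closed_Inter) (auto simp: closed_halfspace_le)
  show "convex R" unfolding R by (intro convex_Inter) (auto simp: convex_halfspace_le)
qed

lemma linear_image_compact_convex_interval:
  fixes f :: "'a::euclidean_space \<Rightarrow> real"
  assumes "compact K" "convex K" "linear f"
  shows "\<exists>l u. f ` K = {l..u}"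
proof -
  have "compact (f ` K)"
    using assms by (intro compact_continuous_image linear_continuous_on) (auto simp: linear_conv_bounded_linear)
  moreover have "connected (f ` K)"
    using assms by (intro convex_connected convex_linear_image)
  ultimately show ?thesis using connected_compact_interval_1 by blast
qed

lemma good_rel_if_rat_polyhedral_rel:
  assumes sub: "R \<subseteq> econ a b \<times> econ a b" and R: "rat_polyhedral_rel R"
  shows "good_rel R (econ a b)"
proof -
  let ?E = "econ a b"
  have interval: "\<exists>l u. f ` (R \<inter> I \<times> J) = {l..u}"
    if "I \<in> subints ?E" "J \<in> subints ?E" "linear f" for I J and f :: "real \<times> real \<Rightarrow> real"
  proof (rule linear_image_compact_convex_interval)
    have IJ: "closed I" "convex I" "closed J" "convex J" using that by (auto simp: subints_def)
    have "bounded (?E \<times> ?E)" by (simp add: econ_def bounded_Times)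
    then have "bounded (R \<inter> I \<times> J)" using sub by (meson bounded_subset inf.coboundedI1)
    moreover have "closed (R \<inter> I \<times> J)"
      using IJ rat_polyhedral_rel_closed_convex(1)[OF R] by (intro closed_Int closed_Times)
    ultimately show "compact (R \<inter> I \<times> J)" by (simp add: compact_eq_bounded_closed)
    show "convex (R \<inter> I \<times> J)"
      using IJ rat_polyhedral_rel_closed_convex(2)[OF R] by (intro convex_Int convex_Times)
  qed (fact that)
  have E: "?E \<in> subints ?E" by (auto simp: subints_def econ_def)
  have "rimg R ?E I \<in> subints ?E \<and> rpre R ?E I \<in> subints ?E" if I: "I \<in> subints ?E" for I
  proof -
    have "rimg R ?E I = snd ` (R \<inter> I \<times> ?E)" unfolding rimg_def using sub by force
    moreover have "rpre R ?E I = fst ` (R \<inter> ?E \<times> I)" unfolding rpre_def using sub by force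
    moreover have "rimg R ?E I \<subseteq> ?E" "rpre R ?E I \<subseteq> ?E" by (auto simp: rimg_def rpre_def)
    ultimately show ?thesis
      using interval[OF I E linear_snd] interval[OF E I linear_fst] unfolding subints_def by auto
  qed
  moreover obtain L where "R = halfplanes L"
    using R by (auto simp: rat_polyhedral_rel_def)
  ultimately show ?thesis
    using sub rat_polyhedral_rel_closed_convex[OF R] unfolding good_rel_def halfplanes_def by blast
qed

section \<open>Energy relations as projections of rational polyhedra\<close>

abbreviation nvars :: "'c etp \<Rightarrow> nat" where
  "nvars P \<equiv> length (trs P) + 2"

text \<open>A run of \<open>P\<close> is encoded by a vector \<open>x\<close>: \<open>x\<^sub>0\<close> and \<open>x\<^sub>1\<close> are the initial and final energy,
  \<open>x\<^sub>j\<^sub>+\<^sub>2\<close> is the delay \<open>d\<^sub>j\<close> spent in \<open>s\<^sub>j\<close>. The clock values and the energy of configuration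
  \<open>2j\<close> (resp. \<open>2j + 1\<close>) are then the following rational affine forms in \<open>x\<close>.\<close>

fun clock_form :: "'c etp \<Rightarrow> 'c \<Rightarrow> nat \<Rightarrow> form" where
  "clock_form P c 0 = form_const 0"
| "clock_form P c (Suc j) =
     (if c \<in> rst P j then form_const 0 else form_add (clock_form P c j) (form_var (j + 2)))"

fun energy_form :: "'c etp \<Rightarrow> nat \<Rightarrow> form" where
  "energy_form P 0 = form_var 0"
| "energy_form P (Suc j) =
     form_add (energy_form P j) (form_add (form_scale (rate P j) (form_var (j + 2))) (form_const (upd P j)))"

definition delayed_clock_form :: "'c etp \<Rightarrow> 'c \<Rightarrow> nat \<Rightarrow> form" where
  "delayed_clock_form P c j = form_add (clock_form P c j) (form_var (j + 2))"

definition delayed_energy_form :: "'c etp \<Rightarrow> nat \<Rightarrow> form" where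
  "delayed_energy_form P j = form_add (energy_form P j) (form_scale (rate P j) (form_var (j + 2)))"

definition run_vector :: "'c etp \<Rightarrow> real set \<Rightarrow> (nat \<Rightarrow> real) \<Rightarrow> bool" where
  "run_vector P E x \<longleftrightarrow>
     (\<forall>j<length (trs P). 0 \<le> x (j + 2)
        \<and> sat (\<lambda>c. eval_form (nvars P) (clock_form P c j) x) (inv P j)
        \<and> sat (\<lambda>c. eval_form (nvars P) (delayed_clock_form P c j) x) (inv P j)
        \<and> sat (\<lambda>c. eval_form (nvars P) (delayed_clock_form P c j) x) (guard P j)
        \<and> eval_form (nvars P) (delayed_energy_form P j) x \<in> E)
   \<and> (\<forall>j\<le>length (trs P). eval_form (nvars P) (energy_form P j) x \<in> E)
   \<and> eval_form (nvars P) (energy_form P (length (trs P))) x = x 1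
   \<and> (\<forall>c. eval_form (nvars P) (clock_form P c (length (trs P))) x = 0)"

lemma run_configurations_eq_forms:
  assumes step: "\<And>j. j < length (trs P) \<Longrightarrow>
        v (2*j+1) = (\<lambda>c. v (2*j) c + x (j + 2))
      \<and> v (2*j+2) = reset (v (2*j+1)) (rst P j)
      \<and> w (2*j+1) = w (2*j) + x (j + 2) * of_rat (rate P j)
      \<and> w (2*j+2) = w (2*j+1) + of_rat (upd P j)"
    and init: "v 0 = (\<lambda>_. 0)" "w 0 = x 0"
    and j: "j \<le> length (trs P)"
  shows "v (2*j) = (\<lambda>c. eval_form (nvars P) (clock_form P c j) x)
       \<and> w (2*j) = eval_form (nvars P) (energy_form P j) x"
  using j
proof (induction j)
  case 0
  then show ?case using init by simp
next
  case (Suc j)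
  then have "j < length (trs P)" by simp
  moreover have "2 * Suc j = 2*j+2" by simp
  ultimately show ?case
    using step[of j] Suc by (auto simp: reset_def fun_eq_iff mult.commute)
qed

lemma run_vector_if_erel:
  assumes "(w0, w1) \<in> erel P E"
  shows "\<exists>x. x 0 = w0 \<and> x 1 = w1 \<and> run_vector P E x"
proof -
  let ?n = "length (trs P)" and ?m = "nvars P"
  obtain v w d where bounds: "v 0 = (\<lambda>_. 0)" "w 0 = w0" "v (2 * ?n) = (\<lambda>_. 0)" "w (2 * ?n) = w1"
    and d: "\<And>j. j < ?n \<Longrightarrow> d j \<ge> 0
        \<and> v (2*j+1) = (\<lambda>x. v (2*j) x + d j)
        \<and> v (2*j+2) = reset (v (2*j+1)) (rst P j)
        \<and> sat (v (2*j)) (inv P j)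
        \<and> sat (v (2*j+1)) (inv P j) \<and> sat (v (2*j+1)) (guard P j)
        \<and> w (2*j+1) = w (2*j) + d j * of_rat (rate P j)
        \<and> w (2*j+2) = w (2*j+1) + of_rat (upd P j)"
    and wE: "\<And>j. j \<le> 2 * ?n \<Longrightarrow> w j \<in> E"
    using assms unfolding erel_def run_sat_def Let_def by blast
  define x where "x i = (if i = 0 then w0 else if i = 1 then w1 else d (i - 2))" for i
  have even: "v (2*j) = (\<lambda>c. eval_form ?m (clock_form P c j) x) \<and> w (2*j) = eval_form ?m (energy_form P j) x"
    if "j \<le> ?n" for j
    using d bounds that by (intro run_configurations_eq_forms) (auto simp: x_def)
  have odd: "v (2*j+1) = (\<lambda>c. eval_form ?m (delayed_clock_form P c j) x)"
    "w (2*j+1) = eval_form ?m (delayed_energy_form P j) x" if "j < ?n" for j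
    using d[OF that] even[of j] that
    by (auto simp: delayed_clock_form_def delayed_energy_form_def x_def fun_eq_iff mult.commute)
  have "run_vector P E x"
    unfolding run_vector_def
  proof (intro conjI allI impI)
    fix j assume j: "j < ?n"
    show "0 \<le> x (j + 2)" using d[OF j] by (simp add: x_def)
    show "sat (\<lambda>c. eval_form ?m (clock_form P c j) x) (inv P j)"
      using d[OF j] even[of j] j by simp
    have "sat (v (2*j+1)) (inv P j)" "sat (v (2*j+1)) (guard P j)" using d[OF j] by blast+
    then show "sat (\<lambda>c. eval_form ?m (delayed_clock_form P c j) x) (inv P j)"
      "sat (\<lambda>c. eval_form ?m (delayed_clock_form P c j) x) (guard P j)"
      using odd(1)[OF j] by simp_all
    show "eval_form ?m (delayed_energy_form P j) x \<in> E"
      using wE[of "2*j+1"] odd(2)[OF j] j by simp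
  next
    fix j assume "j \<le> ?n"
    then show "eval_form ?m (energy_form P j) x \<in> E" using wE[of "2*j"] even[of j] by simp
  next
    show "eval_form ?m (energy_form P ?n) x = x 1" using even[of ?n] bounds by (simp add: x_def)
  next
    fix c show "eval_form ?m (clock_form P c ?n) x = 0" using even[of ?n] bounds by (simp add: fun_eq_iff)
  qed
  then show ?thesis by (intro exI[of _ x]) (simp add: x_def)
qed

definition vector_clocks :: "'c etp \<Rightarrow> (nat \<Rightarrow> real) \<Rightarrow> nat \<Rightarrow> 'c \<Rightarrow> real" where
  "vector_clocks P x k = (\<lambda>c. eval_form (nvars P)
     (if even k then clock_form P c (k div 2) else delayed_clock_form P c (k div 2)) x)"

definition vector_energies :: "'c etp \<Rightarrow> (nat \<Rightarrow> real) \<Rightarrow> nat \<Rightarrow> real" where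
  "vector_energies P x k = eval_form (nvars P)
     (if even k then energy_form P (k div 2) else delayed_energy_form P (k div 2)) x"

lemma run_sat_vector_run:
  assumes "run_vector P E x"
  shows "run_sat P E (vector_clocks P x) (vector_energies P x)"
  unfolding run_sat_def Let_def
proof (intro conjI exI[of _ "\<lambda>j. x (j + 2)"] allI impI)
  let ?v = "vector_clocks P x" and ?w = "vector_energies P x"
  note C = assms[unfolded run_vector_def]
  fix j assume j: "j < length (trs P)"
  have e: "2*j+2 = 2 * Suc j" by simp
  show "0 \<le> x (j + 2)" using C j by simp
  show "?v (2*j+1) = (\<lambda>c. ?v (2*j) c + x (j + 2))" using j
    by (auto simp: vector_clocks_def delayed_clock_form_def)
  show "?v (2*j+2) = reset (?v (2*j+1)) (rst P j)" unfolding e using j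
    by (auto simp: vector_clocks_def reset_def delayed_clock_form_def fun_eq_iff)
  show "sat (?v (2*j)) (inv P j)" "sat (?v (2*j+1)) (inv P j)" "sat (?v (2*j+1)) (guard P j)"
    using C j by (simp_all add: vector_clocks_def)
  show "?w (2*j+1) = ?w (2*j) + x (j + 2) * of_rat (rate P j)" using j
    by (simp add: vector_energies_def delayed_energy_form_def mult.commute)
  show "?w (2*j+2) = ?w (2*j+1) + of_rat (upd P j)" unfolding e using j
    by (simp add: vector_energies_def delayed_energy_form_def)
next
  fix k assume k: "k \<le> 2 * length (trs P)"
  then show "vector_energies P x k \<in> E"
    using assms by (cases "even k") (auto simp: vector_energies_def run_vector_def elim!: oddE)
qed

lemma erel_if_run_vector:
  assumes "run_vector P E x"
  shows "(x 0, x 1) \<in> erel P E"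
proof -
  have "vector_clocks P x 0 = (\<lambda>_. 0)" "vector_energies P x 0 = x 0"
    by (auto simp: vector_clocks_def vector_energies_def)
  moreover have "vector_clocks P x (2 * length (trs P)) = (\<lambda>_. 0)"
    "vector_energies P x (2 * length (trs P)) = x 1"
    using assms by (auto simp: vector_clocks_def vector_energies_def run_vector_def)
  ultimately show ?thesis
    using run_sat_vector_run[OF assms] unfolding erel_def by blast
qed

lemma erel_eq_run_vectors: "erel P E = {(x 0, x 1) |x. run_vector P E x}"
  using run_vector_if_erel erel_if_run_vector by fast

lemma solutions_Cons: "solutions m (f # L) = {x. eval_form m f x \<le> 0} \<inter> solutions m L"
  by (auto simp: solutions_def)

lemma solutions_concat: "x \<in> solutions m (concat Ls) \<longleftrightarrow> (\<forall>L\<in>set Ls. x \<in> solutions m L)"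
  by (auto simp: solutions_def)

fun atom_forms :: "('c \<Rightarrow> form) \<Rightarrow> 'c atom \<Rightarrow> form list" where
  "atom_forms F (x, CLe, q) = [form_diff (F x) (form_const q)]"
| "atom_forms F (x, CGe, q) = [form_diff (form_const q) (F x)]"
| "atom_forms F (x, CEq, q) = [form_diff (F x) (form_const q), form_diff (form_const q) (F x)]"

definition clkc_forms :: "('c \<Rightarrow> form) \<Rightarrow> 'c clkc \<Rightarrow> form list" where
  "clkc_forms F g = concat (map (atom_forms F) g)"

definition interval_forms :: "rat \<Rightarrow> rat \<Rightarrow> form \<Rightarrow> form list" where
  "interval_forms a b f = [form_diff (form_const a) f, form_diff f (form_const b)]"

definition eq_forms :: "form \<Rightarrow> form \<Rightarrow> form list" where
  "eq_forms f g = [form_diff f g, form_diff g f]"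

lemma solutions_atom_forms:
  "x \<in> solutions m (atom_forms F atm) \<longleftrightarrow> sat_atom (\<lambda>c. eval_form m (F c) x) atm"
  by (induction F atm rule: atom_forms.induct) (auto simp: solutions_def)

lemma solutions_clkc_forms:
  "x \<in> solutions m (clkc_forms F g) \<longleftrightarrow> sat (\<lambda>c. eval_form m (F c) x) g"
  by (simp add: clkc_forms_def solutions_concat solutions_atom_forms sat_def)

lemma solutions_interval_forms:
  "x \<in> solutions m (interval_forms a b f) \<longleftrightarrow> eval_form m f x \<in> econ a b"
  by (auto simp: solutions_def interval_forms_def econ_def)

lemma solutions_eq_forms:
  "x \<in> solutions m (eq_forms f g) \<longleftrightarrow> eval_form m f x = eval_form m g x"
  by (auto simp: solutions_def eq_forms_def)

definition step_forms :: "'c etp \<Rightarrow> rat \<Rightarrow> rat \<Rightarrow> nat \<Rightarrow> form list" where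
  "step_forms P a b j =
     [form_scale (-1) (form_var (j + 2))]
   @ clkc_forms (\<lambda>c. clock_form P c j) (inv P j)
   @ clkc_forms (\<lambda>c. delayed_clock_form P c j) (inv P j)
   @ clkc_forms (\<lambda>c. delayed_clock_form P c j) (guard P j)
   @ interval_forms a b (delayed_energy_form P j)"

definition run_forms :: "'c etp \<Rightarrow> rat \<Rightarrow> rat \<Rightarrow> 'c list \<Rightarrow> form list" where
  "run_forms P a b cs =
     concat (map (step_forms P a b) [0..<length (trs P)])
   @ concat (map (\<lambda>j. interval_forms a b (energy_form P j)) [0..<Suc (length (trs P))])
   @ eq_forms (energy_form P (length (trs P))) (form_var 1)
   @ concat (map (\<lambda>c. eq_forms (clock_form P c (length (trs P))) (form_const 0)) cs)"

lemma solutions_step_forms: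
  assumes "j < length (trs P)"
  shows "x \<in> solutions (nvars P) (step_forms P a b j) \<longleftrightarrow>
      0 \<le> x (j + 2)
    \<and> sat (\<lambda>c. eval_form (nvars P) (clock_form P c j) x) (inv P j)
    \<and> sat (\<lambda>c. eval_form (nvars P) (delayed_clock_form P c j) x) (inv P j)
    \<and> sat (\<lambda>c. eval_form (nvars P) (delayed_clock_form P c j) x) (guard P j)
    \<and> eval_form (nvars P) (delayed_energy_form P j) x \<in> econ a b"
  using assms
  by (simp add: step_forms_def solutions_Cons solutions_append solutions_clkc_forms
      solutions_interval_forms)

lemma solutions_run_forms_iff:
  assumes "set cs = UNIV"
  shows "x \<in> solutions (nvars P) (run_forms P a b cs) \<longleftrightarrow> run_vector P (econ a b) x"
  using assms solutions_step_forms[of _ P x a b]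
  by (auto simp: run_forms_def run_vector_def solutions_append solutions_concat
      solutions_interval_forms solutions_eq_forms atLeast0LessThan lessThan_Suc_atMost simp del: upt_Suc)

lemma rat_polyhedral_rel_erel: "rat_polyhedral_rel (erel (P :: 'c::finite etp) (econ a b))"
proof -
  obtain cs :: "'c list" where cs: "set cs = UNIV"
    using finite_list[of "UNIV :: 'c set"] by auto
  let ?S = "solutions (2 + length (trs P)) (run_forms P a b cs)"
  have "erel P (econ a b) = {(x 0, x 1) |x. x \<in> ?S}"
    unfolding erel_eq_run_vectors solutions_run_forms_iff[OF cs, symmetric] by (simp add: add.commute)
  also have "rat_polyhedral_rel \<dots>"
    by (rule rat_polyhedral_rel_project) (auto simp: rat_polyhedron_def)
  finally show ?thesis .
qed

lemma erel_subset: "erel P E \<subseteq> E \<times> E"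
  unfolding erel_def run_sat_def Let_def by fastforce

lemma ecomp_subset: "ecomp Ps E \<subseteq> E \<times> E"
  by (induction Ps E rule: ecomp.induct) (use erel_subset in \<open>auto simp: Id_on_def\<close>)

lemma rat_polyhedral_rel_ecomp:
  "Ps \<noteq> [] \<Longrightarrow> rat_polyhedral_rel (ecomp (Ps :: 'c::finite etp list) (econ a b))"
  by (induction Ps "econ a b" rule: ecomp.induct)
    (simp_all add: rat_polyhedral_rel_erel rat_polyhedral_rel_relcomp)

theorem mainTheorem2:
  fixes P :: "('c::finite) etp" and a b :: rat
  shows "good_rel (erel P (econ a b)) (econ a b)
       \<and> (\<forall>Ps :: 'c etp list. Ps \<noteq> [] \<longrightarrow> good_rel (ecomp Ps (econ a b)) (econ a b))"
proof (intro conjI allI impI)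
  show "good_rel (erel P (econ a b)) (econ a b)"
    by (intro good_rel_if_rat_polyhedral_rel erel_subset rat_polyhedral_rel_erel)
  show "good_rel (ecomp Ps (econ a b)) (econ a b)" if "Ps \<noteq> []" for Ps :: "'c etp list"
    using that by (intro good_rel_if_rat_polyhedral_rel ecomp_subset rat_polyhedral_rel_ecomp)
qed

end
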